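(* Let $f^0=0,f^1=0,\dots,f^r=0$ be DAEs in size $n$ such that, for each $k\in[r]$, $f^k$ is obtained from $f^{k-1}$ as $f^k(y,\dot y,\dots,t)=U^k(D_t)\,f^{k-1}(V^k(D_t)y,V^k(D_t)\dot y,\dots,t)$ with $U^k(D_t)=\operatorname{diag}\{D_t^{-p^k_i}\}U^k\operatorname{diag}\{D_t^{p^k_i}\}$, $V^k(D_t)=\operatorname{diag}\{D_t^{-q^k_i}\}V^k\operatorname{diag}\{D_t^{q^k_i}\}$, where $(p^k,q^k)$ is an optimal solution to $(\mathrm{D}_{f^{k-1}})$ and $U^k,V^k\in\mathbb{R}^{n\times n}$ are nonsingular, $U^k$ upper-triangular along $p^k$, $V^k$ upper-triangular along $q^k$, with $\operatorname{trank}(U^kJ_{f^{k-1}}^{p^k,q^k}V^k)<n$; and suppose $f^r=0$ is structurally nonsingular with system Jacobian not identically singular. Define the DAE $f^*=0$ of size $2n$ in the variable $(x(t),z(t))$ by $f^*_i=f^r_i(z,\dot z,\dots,t)$ and $f^*_{n+i}=x_i-\big(V^1(D_t)\cdots V^r(D_t)z\big)_i$ for $i\in[n]$. Then the system Jacobian of $f^*=0$ is nonsingular, i.e. $\det J_{f^*}^{p,q}\not\equiv0$ for an optimal solution $(p,q)$ of $(\mathrm{D}_{f^*})$.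
   Context: A DAE is $f(x,\dot x,\dots,x^{(k)},t)=0$ with $f$ smooth. Its $\sigma$-function is $\sigma_f(i,j)=\max\{l\in\mathbb{Z}_{\ge0}:\partial f_i/\partial x_j^{(l)}\not\equiv0\}$ ($\max\emptyset=-\infty$). $(\mathrm{D}_f)$: minimize $\sum_j q_j-\sum_i p_i$ subject to $q_j-p_i\ge\sigma_f(i,j)$, $p_i,q_j\in\mathbb{Z}_{\ge0}$; $\hat\delta_f$ denotes its optimal value ($-\infty$ if infeasible), and $f=0$ is structurally nonsingular if $\hat\delta_f\ne-\infty$. For optimal $(p,q)$ the system Jacobian is $J_f^{p,q}=\big(\partial f_i/\partial x_j^{(q_j-p_i)}\big)_{ij}$; it is nonsingular if its determinant is not identically zero (this does not depend on the choice of optimal $(p,q)$). $\operatorname{trank}$ is the term-rank (maximum number of not-identically-zero entries with no two in a common row or column). A matrix $U$ is upper-triangular along $p$ if $U_{ij}=0$ whenever $p_i>p_j$. $D_t=\mathrm{d}/\mathrm{d}t$, and the matrices $U^k(D_t),V^k(D_t)$ have entries polynomial in $D_t$. *)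

theory Defs
  imports "HOL-Analysis.Analysis"
begin

text \<open>Jet space: a point assigns a real value to every jet variable x_j^(l),
  indexed by the pair (j, l). A DAE of size n is a family of n such functions
  (equation index i < n), in the variables x_0, ..., x_(n-1).\<close>

type_synonym jet = "nat \<times> nat \<Rightarrow> real"
type_synonym dfun = "jet \<Rightarrow> real \<Rightarrow> real"

text \<open>Partial derivatives: Some (j,l) is the coordinate x_j^(l), None is t.\<close>
definition pd :: "(nat \<times> nat) option \<Rightarrow> dfun \<Rightarrow> dfun" where
  "pd c g = (case c of
      Some jl \<Rightarrow> (\<lambda>X t. deriv (\<lambda>s. g (X(jl := s)) t) (X jl))
    | None \<Rightarrow> (\<lambda>X t. deriv (\<lambda>s. g X s) t))"

definition pd_exists :: "(nat \<times> nat) option \<Rightarrow> dfun \<Rightarrow> bool" where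
  "pd_exists c g = (\<forall>X t. (case c of
      Some jl \<Rightarrow> (\<lambda>s. g (X(jl := s)) t) differentiable (at (X jl))
    | None \<Rightarrow> (\<lambda>s. g X s) differentiable (at t)))"

definition iter_pd :: "(nat \<times> nat) option list \<Rightarrow> dfun \<Rightarrow> dfun" where
  "iter_pd cs g = foldr pd cs g"

definition smooth_dfun :: "dfun \<Rightarrow> bool" where
  "smooth_dfun g = (\<forall>cs. continuous_on UNIV (\<lambda>(X, t). iter_pd cs g X t)
                       \<and> (\<forall>c. pd_exists c (iter_pd cs g)))"

definition depends_within :: "nat \<Rightarrow> nat \<Rightarrow> dfun \<Rightarrow> bool" where
  "depends_within n K g = (\<forall>X Y t. (\<forall>j<n. \<forall>l\<le>K. X (j, l) = Y (j, l)) \<longrightarrow> g X t = g Y t)"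

definition is_DAE :: "nat \<Rightarrow> (nat \<Rightarrow> dfun) \<Rightarrow> bool" where
  "is_DAE n f = (\<exists>K. \<forall>i<n. smooth_dfun (f i) \<and> depends_within n K (f i))"

definition not_ident_zero :: "dfun \<Rightarrow> bool" where
  "not_ident_zero g = (\<exists>X t. g X t \<noteq> 0)"

text \<open>sigma-function, with value -\<infinity> for the empty maximum.\<close>
definition sigma :: "(nat \<Rightarrow> dfun) \<Rightarrow> nat \<Rightarrow> nat \<Rightarrow> ereal" where
  "sigma f i j = (SUP l \<in> {l. not_ident_zero (pd (Some (j, l)) (f i))}. ereal (real l))"

definition dual_feasible :: "nat \<Rightarrow> (nat \<Rightarrow> dfun) \<Rightarrow> (nat \<Rightarrow> nat) \<Rightarrow> (nat \<Rightarrow> nat) \<Rightarrow> bool" where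
  "dual_feasible n f p q = (\<forall>i<n. \<forall>j<n. ereal (real_of_int (int (q j) - int (p i))) \<ge> sigma f i j)"

definition dual_obj :: "nat \<Rightarrow> (nat \<Rightarrow> nat) \<Rightarrow> (nat \<Rightarrow> nat) \<Rightarrow> int" where
  "dual_obj n p q = (\<Sum>j<n. int (q j)) - (\<Sum>i<n. int (p i))"

definition dual_optimal :: "nat \<Rightarrow> (nat \<Rightarrow> dfun) \<Rightarrow> (nat \<Rightarrow> nat) \<Rightarrow> (nat \<Rightarrow> nat) \<Rightarrow> bool" where
  "dual_optimal n f p q = (dual_feasible n f p q \<and>
      (\<forall>p' q'. dual_feasible n f p' q' \<longrightarrow> dual_obj n p q \<le> dual_obj n p' q'))"

text \<open>Structural nonsingularity: the optimal value of (D_f) is finite,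
  i.e. an optimal solution exists.\<close>
definition struct_nonsingular :: "nat \<Rightarrow> (nat \<Rightarrow> dfun) \<Rightarrow> bool" where
  "struct_nonsingular n f = (\<exists>p q. dual_optimal n f p q)"

definition detn :: "nat \<Rightarrow> (nat \<Rightarrow> nat \<Rightarrow> real) \<Rightarrow> real" where
  "detn n A = (\<Sum>\<pi> | \<pi> permutes {..<n}. of_int (sign \<pi>) * (\<Prod>i<n. A i (\<pi> i)))"

definition sys_jac :: "(nat \<Rightarrow> dfun) \<Rightarrow> (nat \<Rightarrow> nat) \<Rightarrow> (nat \<Rightarrow> nat) \<Rightarrow> nat \<Rightarrow> nat \<Rightarrow> dfun" where
  "sys_jac f p q i j = (if p i \<le> q j then pd (Some (j, q j - p i)) (f i) else (\<lambda>X t. 0))"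

definition jac_nonsingular_at :: "nat \<Rightarrow> (nat \<Rightarrow> dfun) \<Rightarrow> (nat \<Rightarrow> nat) \<Rightarrow> (nat \<Rightarrow> nat) \<Rightarrow> bool" where
  "jac_nonsingular_at n f p q = (\<exists>X t. detn n (\<lambda>i j. sys_jac f p q i j X t) \<noteq> 0)"

definition sys_jac_nonsingular :: "nat \<Rightarrow> (nat \<Rightarrow> dfun) \<Rightarrow> bool" where
  "sys_jac_nonsingular n f = (\<exists>p q. dual_optimal n f p q \<and> jac_nonsingular_at n f p q)"

definition trank :: "nat \<Rightarrow> (nat \<Rightarrow> nat \<Rightarrow> dfun) \<Rightarrow> nat" where
  "trank n M = Max {card S | S. S \<subseteq> {..<n} \<times> {..<n} \<and> inj_on fst S \<and> inj_on snd S
                               \<and> (\<forall>(i, j) \<in> S. not_ident_zero (M i j))}"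

definition upper_tri_along :: "nat \<Rightarrow> (nat \<Rightarrow> nat) \<Rightarrow> (nat \<Rightarrow> nat \<Rightarrow> real) \<Rightarrow> bool" where
  "upper_tri_along n p U = (\<forall>i<n. \<forall>j<n. p i > p j \<longrightarrow> U i j = 0)"

definition UJV :: "nat \<Rightarrow> (nat \<Rightarrow> nat \<Rightarrow> real) \<Rightarrow> (nat \<Rightarrow> nat \<Rightarrow> dfun) \<Rightarrow> (nat \<Rightarrow> nat \<Rightarrow> real)
                   \<Rightarrow> nat \<Rightarrow> nat \<Rightarrow> dfun" where
  "UJV n U J V i j = (\<lambda>X t. \<Sum>a<n. \<Sum>b<n. U i a * J a b X t * V b j)"

text \<open>Total time derivative D_t on jet space: the derivative along the vector
  field d/dt + sum x_j^(l+1) d/dx_j^(l).\<close>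
definition Dt :: "dfun \<Rightarrow> dfun" where
  "Dt h = (\<lambda>Y t. deriv (\<lambda>s. h (\<lambda>(j, l). Y (j, l) + s * Y (j, Suc l)) (t + s)) 0)"

text \<open>Jet of x = V(D_t) y, where V(D_t) = diag(D_t^{-q_i}) V diag(D_t^{q_i}),
  i.e. x_i = sum_j V_ij D_t^{q_j - q_i} y_j, so
  x_i^(l) = sum_j V_ij y_j^(q_j - q_i + l).\<close>
definition Vop_jet :: "nat \<Rightarrow> (nat \<Rightarrow> nat \<Rightarrow> real) \<Rightarrow> (nat \<Rightarrow> nat) \<Rightarrow> jet \<Rightarrow> jet" where
  "Vop_jet n V q Y = (\<lambda>(i, l). \<Sum>j<n. V i j * Y (j, q j + l - q i))"

text \<open>f^k = U(D_t) f^{k-1}(V(D_t) y, V(D_t) y', ..., t), with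
  U(D_t) = diag(D_t^{-p_i}) U diag(D_t^{p_i}).\<close>
definition transform_DAE :: "nat \<Rightarrow> (nat \<Rightarrow> nat \<Rightarrow> real) \<Rightarrow> (nat \<Rightarrow> nat) \<Rightarrow> (nat \<Rightarrow> nat \<Rightarrow> real)
                            \<Rightarrow> (nat \<Rightarrow> nat) \<Rightarrow> (nat \<Rightarrow> dfun) \<Rightarrow> nat \<Rightarrow> dfun" where
  "transform_DAE n U p V q f i =
     (\<lambda>Y t. \<Sum>j<n. U i j * (Dt ^^ (p j - p i)) (\<lambda>Y' t'. f j (Vop_jet n V q Y') t') Y t)"

text \<open>The augmented DAE f^* of size 2n in the variables (x, z): variable j < n
  is x_j, variable n + j is z_j.\<close>
definition aug_DAE :: "nat \<Rightarrow> nat \<Rightarrow> (nat \<Rightarrow> nat \<Rightarrow> nat \<Rightarrow> real) \<Rightarrow> (nat \<Rightarrow> nat \<Rightarrow> nat)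
                       \<Rightarrow> (nat \<Rightarrow> dfun) \<Rightarrow> nat \<Rightarrow> dfun" where
  "aug_DAE n r V q fr i =
     (\<lambda>W t. let Z = (\<lambda>(j, l). W (n + j, l)) in
        if i < n then fr i Z t
        else W (i - n, 0)
             - foldr (\<lambda>k Y. Vop_jet n (V k) (q k) Y) [1..<Suc r] Z (i - n, 0))"

end

theory Submission
  imports Defs "Jordan_Normal_Form.Determinant"
begin

text \<open>Take an optimal \<open>(p^r, q^r)\<close> for \<open>f^r\<close> whose system Jacobian \<open>J\<close> is nonsingular, and
  \<open>M\<close> larger than every derivative order of \<open>z\<close> read by the rows \<open>x = V^1(D_t) ... V^r(D_t) z\<close>.
  Then \<open>p = (p^r + M, 0)\<close>, \<open>q = (0, q^r + M)\<close> is feasible for \<open>f^*\<close>, and the system Jacobian it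
  selects is the block matrix \<open>[[0, J], [I, 0]]\<close>, with determinant \<open>\<plusminus>det J\<close>. A feasible dual
  solution with nonsingular system Jacobian is optimal: a nonzero term of the determinant is a
  perfect matching along which every \<open>q_j - p_i\<close> is a derivative order that occurs, so summing
  along it bounds every dual objective from below.\<close>

lemma detn_eq_det: "detn n A = det (mat n n (\<lambda>(i, j). A i j))"
  unfolding detn_def det_def by (simp add: atLeast0LessThan)

lemma detn_cong:
  assumes "\<And>i j. i < n \<Longrightarrow> j < n \<Longrightarrow> A i j = B i j"
  shows "detn n A = detn n B"
  unfolding detn_eq_det using assms by (intro arg_cong[where f = det] eq_matI) auto

lemma detn_nonzero_obtains_perm:
  assumes "detn n A \<noteq> 0"
  obtains \<pi> where "\<pi> permutes {..<n}" "\<forall>i<n. A i (\<pi> i) \<noteq> 0"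
proof -
  have "\<exists>\<pi>. \<pi> permutes {..<n} \<and> (\<Prod>i<n. A i (\<pi> i)) \<noteq> 0"
  proof (rule ccontr)
    assume "\<not> ?thesis"
    then have "detn n A = 0" unfolding detn_def by (intro sum.neutral) auto
    with assms show False by contradiction
  qed
  with that show thesis by auto
qed

lemma detn_antidiagonal_blocks_nonzero:
  fixes J :: "nat \<Rightarrow> nat \<Rightarrow> real"
  assumes "detn n J \<noteq> 0"
  shows "detn (2 * n) (\<lambda>i c. if i < n then (if c < n then 0 else J i (c - n))
                          else (if c = i - n then 1 else 0)) \<noteq> 0"
proof -
  let ?J = "mat n n (\<lambda>(i, j). J i j)"
  have "mat (2 * n) (2 * n) (\<lambda>(i, c). if i < n then (if c < n then 0 else J i (c - n))
                                   else (if c = i - n then 1 else 0))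
        = four_block_mat (0\<^sub>m n n) ?J (1\<^sub>m n) (0\<^sub>m n n)"
    by (rule eq_matI) auto
  moreover have "det (four_block_mat (0\<^sub>m n n) ?J (1\<^sub>m n) (0\<^sub>m n n)) = det (0\<^sub>m n n * 0\<^sub>m n n - ?J * 1\<^sub>m n)"
    by (rule det_four_block_mat) auto
  moreover have "0\<^sub>m n n * 0\<^sub>m n n - ?J * 1\<^sub>m n = - ?J"
    by (rule eq_matI) auto
  moreover have "det (- ?J) \<noteq> 0"
    using det_0_negate[of ?J n] assms by (simp add: detn_eq_det)
  ultimately show ?thesis by (simp add: detn_eq_det)
qed

lemma ereal_le_sigma:
  assumes "not_ident_zero (pd (Some (j, l)) (f i))"
  shows "ereal (real l) \<le> sigma f i j"
  unfolding sigma_def by (rule SUP_upper) (use assms in auto)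

lemma sigma_le:
  assumes "\<And>l. not_ident_zero (pd (Some (j, l)) (f i)) \<Longrightarrow> ereal (real l) \<le> b"
  shows "sigma f i j \<le> b"
  unfolding sigma_def by (rule SUP_least) (use assms in auto)

lemma dual_feasible_le:
  assumes "dual_feasible n f p q" "i < n" "j < n" "not_ident_zero (pd (Some (j, l)) (f i))"
  shows "int l \<le> int (q j) - int (p i)"
proof -
  have "ereal (real l) \<le> ereal (real_of_int (int (q j) - int (p i)))"
    using ereal_le_sigma[of j l f i, OF assms(4)] assms(1-3) unfolding dual_feasible_def
    by (meson order_trans)
  then show ?thesis by simp
qed

lemma dual_obj_permute:
  assumes "\<pi> permutes {..<n}"
  shows "dual_obj n p q = (\<Sum>i<n. int (q (\<pi> i)) - int (p i))"
  unfolding dual_obj_def sum_subtractf sum.permute[OF assms, of "\<lambda>j. int (q j)"] by simp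

lemma sum_matching_le_dual_obj:
  assumes "dual_feasible n f p q" "\<pi> permutes {..<n}"
    and "\<And>i. i < n \<Longrightarrow> not_ident_zero (pd (Some (\<pi> i, l i)) (f i))"
  shows "(\<Sum>i<n. int (l i)) \<le> dual_obj n p q"
proof -
  have "\<pi> i < n" if "i < n" for i
    using assms(2) that by (meson lessThan_iff permutes_in_image)
  then have "(\<Sum>i<n. int (l i)) \<le> (\<Sum>i<n. int (q (\<pi> i)) - int (p i))"
    using assms(1,3) by (intro sum_mono dual_feasible_le) auto
  then show ?thesis unfolding dual_obj_permute[OF assms(2)] .
qed

lemma dual_optimal_if_jac_nonsingular_at:
  assumes feas: "dual_feasible n f p q" and ns: "jac_nonsingular_at n f p q"
  shows "dual_optimal n f p q"
proof -
  obtain X t where det: "detn n (\<lambda>i j. sys_jac f p q i j X t) \<noteq> 0"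
    using ns unfolding jac_nonsingular_at_def by blast
  obtain \<pi> where \<pi>: "\<pi> permutes {..<n}" and nz: "\<forall>i<n. sys_jac f p q i (\<pi> i) X t \<noteq> 0"
    using det by (rule detn_nonzero_obtains_perm)
  define l where "l i = q (\<pi> i) - p i" for i
  have le: "p i \<le> q (\<pi> i)" and occurs: "not_ident_zero (pd (Some (\<pi> i, l i)) (f i))"
    if "i < n" for i
  proof -
    from nz that have "sys_jac f p q i (\<pi> i) X t \<noteq> 0" by blast
    then show "p i \<le> q (\<pi> i)" and "not_ident_zero (pd (Some (\<pi> i, l i)) (f i))"
      unfolding sys_jac_def not_ident_zero_def l_def by (metis (full_types))+
  qed
  have obj: "dual_obj n p q = (\<Sum>i<n. int (l i))"
    unfolding dual_obj_permute[OF \<pi>] l_def by (intro sum.cong refl) (simp add: le of_nat_diff)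
  show ?thesis
    unfolding dual_optimal_def
  proof (intro conjI allI impI feas)
    fix p' q' assume "dual_feasible n f p' q'"
    from sum_matching_le_dual_obj[OF this \<pi> occurs] show "dual_obj n p q \<le> dual_obj n p' q'"
      unfolding obj .
  qed
qed

lemma pd_eq_0_if_const:
  assumes "\<And>s. g (X(jl := s)) t = c"
  shows "pd (Some jl) g X t = 0"
  using assms unfolding pd_def by simp

lemma pd_eq_1_if_translate:
  assumes "\<And>s. g (X(jl := s)) t = s - c"
  shows "pd (Some jl) g X t = 1"
proof -
  have "deriv (\<lambda>s. s - c) (X jl) = 1"
    by (rule DERIV_imp_deriv) (auto intro!: derivative_eq_intros)
  then show ?thesis using assms unfolding pd_def by simp
qed

definition Vop_chain :: "nat \<Rightarrow> (nat \<Rightarrow> nat \<Rightarrow> nat \<Rightarrow> real) \<Rightarrow> (nat \<Rightarrow> nat \<Rightarrow> nat) \<Rightarrow> nat list \<Rightarrow> jet \<Rightarrow> jet" where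
  "Vop_chain n V q ks = foldr (\<lambda>k Y. Vop_jet n (V k) (q k) Y) ks"

definition Vop_chain_order_bound :: "nat \<Rightarrow> (nat \<Rightarrow> nat \<Rightarrow> nat) \<Rightarrow> nat list \<Rightarrow> nat" where
  "Vop_chain_order_bound n q ks = (\<Sum>k\<leftarrow>ks. \<Sum>j<n. q k j)"

lemma Vop_chain_cong:
  assumes "i < n" "\<And>j l'. j < n \<Longrightarrow> l' \<le> l + Vop_chain_order_bound n q ks \<Longrightarrow> Z (j, l') = Z' (j, l')"
  shows "Vop_chain n V q ks Z (i, l) = Vop_chain n V q ks Z' (i, l)"
  using assms
proof (induction ks arbitrary: i l)
  case Nil
  then show ?case by (simp add: Vop_chain_def Vop_chain_order_bound_def)
next
  case (Cons k ks)
  have "Vop_chain n V q ks Z (j, q k j + l - q k i) = Vop_chain n V q ks Z' (j, q k j + l - q k i)"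
    if j: "j < n" for j
  proof (rule Cons.IH[OF j])
    fix j' l' assume "j' < n" "l' \<le> q k j + l - q k i + Vop_chain_order_bound n q ks"
    moreover have "q k j \<le> (\<Sum>j<n. q k j)" using j by (intro member_le_sum) auto
    ultimately have "l' \<le> l + Vop_chain_order_bound n q (k # ks)" by (simp add: Vop_chain_order_bound_def)
    with \<open>j' < n\<close> show "Z (j', l') = Z' (j', l')" by (rule Cons.prems(2))
  qed
  then show ?case by (simp add: Vop_chain_def Vop_jet_def)
qed

definition z_jet :: "nat \<Rightarrow> jet \<Rightarrow> jet" where
  "z_jet n W = (\<lambda>(j, l). W (n + j, l))"

lemma z_jet_upd_x: "c < n \<Longrightarrow> z_jet n (W((c, l) := s)) = z_jet n W"
  unfolding z_jet_def by (auto simp: fun_eq_iff)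

lemma z_jet_upd_z: "n \<le> c \<Longrightarrow> z_jet n (W((c, l) := s)) = (z_jet n W)((c - n, l) := s)"
  unfolding z_jet_def by (auto simp: fun_eq_iff)

lemma aug_DAE_eq:
  "aug_DAE n r V q fr i W t =
     (if i < n then fr i (z_jet n W) t
      else W (i - n, 0) - Vop_chain n V q [1..<Suc r] (z_jet n W) (i - n, 0))"
  unfolding aug_DAE_def z_jet_def Vop_chain_def Let_def by simp

lemma pd_aug_DAE_upper_x:
  assumes "i < n" "c < n"
  shows "pd (Some (c, l)) (aug_DAE n r V q fr i) W t = 0"
  by (rule pd_eq_0_if_const) (use assms in \<open>simp add: aug_DAE_eq z_jet_upd_x\<close>)

lemma pd_aug_DAE_upper_z:
  assumes "i < n" "n \<le> c"
  shows "pd (Some (c, l)) (aug_DAE n r V q fr i) W t = pd (Some (c - n, l)) (fr i) (z_jet n W) t"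
proof -
  have "W (c, l) = z_jet n W (c - n, l)" using assms unfolding z_jet_def by simp
  then show ?thesis unfolding pd_def using assms by (simp add: aug_DAE_eq z_jet_upd_z)
qed

lemma pd_aug_DAE_lower_x:
  assumes "n \<le> i" "c < n"
  shows "pd (Some (c, l)) (aug_DAE n r V q fr i) W t = (if c = i - n \<and> l = 0 then 1 else 0)"
proof (cases "c = i - n \<and> l = 0")
  case True
  have "pd (Some (c, l)) (aug_DAE n r V q fr i) W t = 1"
    by (rule pd_eq_1_if_translate[where c = "Vop_chain n V q [1..<Suc r] (z_jet n W) (i - n, 0)"])
      (use assms True in \<open>simp add: aug_DAE_eq z_jet_upd_x\<close>)
  with True show ?thesis by simp
next
  case False
  then have "(i - n, 0) \<noteq> (c, l)" by auto
  have "pd (Some (c, l)) (aug_DAE n r V q fr i) W t = 0"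
  proof (rule pd_eq_0_if_const)
    fix s
    from \<open>(i - n, 0) \<noteq> (c, l)\<close> have "(W((c, l) := s)) (i - n, 0) = W (i - n, 0)"
      by (rule fun_upd_other)
    with assms show "aug_DAE n r V q fr i (W((c, l) := s)) t = aug_DAE n r V q fr i W t"
      by (simp add: aug_DAE_eq z_jet_upd_x)
  qed
  with False show ?thesis by simp
qed

lemma pd_aug_DAE_lower_z:
  assumes "n \<le> i" "i < 2 * n" "n \<le> c" "Vop_chain_order_bound n q [1..<Suc r] < l"
  shows "pd (Some (c, l)) (aug_DAE n r V q fr i) W t = 0"
proof (rule pd_eq_0_if_const)
  fix s
  have "Vop_chain n V q [1..<Suc r] (z_jet n (W((c, l) := s))) (i - n, 0)
      = Vop_chain n V q [1..<Suc r] (z_jet n W) (i - n, 0)"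
    by (rule Vop_chain_cong) (use assms in \<open>auto simp: z_jet_def\<close>)
  with assms show "aug_DAE n r V q fr i (W((c, l) := s)) t
      = W (i - n, 0) - Vop_chain n V q [1..<Suc r] (z_jet n W) (i - n, 0)"
    by (simp add: aug_DAE_eq)
qed

definition aug_p :: "nat \<Rightarrow> nat \<Rightarrow> (nat \<Rightarrow> nat) \<Rightarrow> nat \<Rightarrow> nat" where
  "aug_p n M p i = (if i < n then p i + M else 0)"

definition aug_q :: "nat \<Rightarrow> nat \<Rightarrow> (nat \<Rightarrow> nat) \<Rightarrow> nat \<Rightarrow> nat" where
  "aug_q n M q c = (if c < n then 0 else q (c - n) + M)"

lemma aug_DAE_dual_feasible:
  assumes feas: "dual_feasible n fr p q" and M: "Vop_chain_order_bound n q' [1..<Suc r] < M"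
  shows "dual_feasible (2 * n) (aug_DAE n r V q' fr) (aug_p n M p) (aug_q n M q)"
  unfolding dual_feasible_def
proof (intro allI impI sigma_le)
  fix i c l assume i: "i < 2 * n" and c: "c < 2 * n"
    and "not_ident_zero (pd (Some (c, l)) (aug_DAE n r V q' fr i))"
  then obtain W t where nz: "pd (Some (c, l)) (aug_DAE n r V q' fr i) W t \<noteq> 0"
    unfolding not_ident_zero_def by blast
  have "int l \<le> int (aug_q n M q c) - int (aug_p n M p i)"
  proof (cases "i < n"; cases "c < n")
    assume "i < n" "\<not> c < n"
    then have "not_ident_zero (pd (Some (c - n, l)) (fr i))"
      using nz unfolding not_ident_zero_def by (auto simp: pd_aug_DAE_upper_z)
    then have "int l \<le> int (q (c - n)) - int (p i)"
      using feas \<open>i < n\<close> c by (intro dual_feasible_le) auto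
    with \<open>i < n\<close> \<open>\<not> c < n\<close> show ?thesis by (simp add: aug_p_def aug_q_def)
  next
    assume "\<not> i < n" "c < n"
    then have "l = 0" using nz by (simp add: pd_aug_DAE_lower_x split: if_splits)
    with \<open>\<not> i < n\<close> \<open>c < n\<close> show ?thesis by (simp add: aug_p_def aug_q_def)
  next
    assume "\<not> i < n" "\<not> c < n"
    have "l < M"
    proof (rule ccontr)
      assume "\<not> l < M"
      with M have "Vop_chain_order_bound n q' [1..<Suc r] < l" by linarith
      moreover have "n \<le> i" "n \<le> c" using \<open>\<not> i < n\<close> \<open>\<not> c < n\<close> by simp_all
      ultimately have "pd (Some (c, l)) (aug_DAE n r V q' fr i) W t = 0"
        using i by (intro pd_aug_DAE_lower_z)
      with nz show False by contradiction
    qed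
    with \<open>\<not> i < n\<close> \<open>\<not> c < n\<close> show ?thesis by (simp add: aug_p_def aug_q_def)
  qed (use nz pd_aug_DAE_upper_x in auto)
  then show "ereal (real l) \<le> ereal (real_of_int (int (aug_q n M q c) - int (aug_p n M p i)))"
    by simp
qed

lemma sys_jac_aug_DAE:
  assumes "i < 2 * n" "c < 2 * n" "Vop_chain_order_bound n q' [1..<Suc r] < M"
  shows "sys_jac (aug_DAE n r V q' fr) (aug_p n M p) (aug_q n M q) i c W t =
    (if i < n then (if c < n then 0 else sys_jac fr p q i (c - n) (z_jet n W) t)
     else (if c = i - n then 1 else 0))"
  using assms pd_aug_DAE_upper_z[of i n c] pd_aug_DAE_lower_x[of n i c]
    pd_aug_DAE_lower_z[of n i c q' r "q (c - n) + M"]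
  by (auto simp: sys_jac_def aug_p_def aug_q_def)

lemma aug_DAE_jac_nonsingular_at:
  assumes "jac_nonsingular_at n fr p q" "Vop_chain_order_bound n q' [1..<Suc r] < M"
  shows "jac_nonsingular_at (2 * n) (aug_DAE n r V q' fr) (aug_p n M p) (aug_q n M q)"
proof -
  obtain X t where det: "detn n (\<lambda>i j. sys_jac fr p q i j X t) \<noteq> 0"
    using assms(1) unfolding jac_nonsingular_at_def by blast
  define W :: jet where "W = (\<lambda>(c, l). if n \<le> c then X (c - n, l) else 0)"
  have zW: "z_jet n W = X" unfolding z_jet_def W_def by (auto simp: fun_eq_iff)
  have "detn (2 * n) (\<lambda>i c. sys_jac (aug_DAE n r V q' fr) (aug_p n M p) (aug_q n M q) i c W t)
      = detn (2 * n) (\<lambda>i c. if i < n then (if c < n then 0 else sys_jac fr p q i (c - n) X t)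
                            else (if c = i - n then 1 else 0))"
    by (rule detn_cong) (simp add: sys_jac_aug_DAE[OF _ _ assms(2)] zW)
  with detn_antidiagonal_blocks_nonzero[OF det]
  have "detn (2 * n) (\<lambda>i c. sys_jac (aug_DAE n r V q' fr) (aug_p n M p) (aug_q n M q) i c W t) \<noteq> 0"
    by simp
  then show ?thesis unfolding jac_nonsingular_at_def by blast
qed

theorem theorem5:
  fixes n r :: nat
    and f :: "nat \<Rightarrow> nat \<Rightarrow> dfun"
    and U V :: "nat \<Rightarrow> nat \<Rightarrow> nat \<Rightarrow> real"
    and p q :: "nat \<Rightarrow> nat \<Rightarrow> nat"
  assumes DAEs: "\<And>k. k \<le> r \<Longrightarrow> is_DAE n (f k)"
    and opt: "\<And>k. k \<in> {1..r} \<Longrightarrow> dual_optimal n (f (k - 1)) (p k) (q k)"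
    and U_nonsing: "\<And>k. k \<in> {1..r} \<Longrightarrow> detn n (U k) \<noteq> 0"
    and V_nonsing: "\<And>k. k \<in> {1..r} \<Longrightarrow> detn n (V k) \<noteq> 0"
    and U_tri: "\<And>k. k \<in> {1..r} \<Longrightarrow> upper_tri_along n (p k) (U k)"
    and V_tri: "\<And>k. k \<in> {1..r} \<Longrightarrow> upper_tri_along n (q k) (V k)"
    and trank_lt: "\<And>k. k \<in> {1..r} \<Longrightarrow>
          trank n (UJV n (U k) (sys_jac (f (k - 1)) (p k) (q k)) (V k)) < n"
    and step: "\<And>k i. k \<in> {1..r} \<Longrightarrow> i < n \<Longrightarrow>
          f k i = transform_DAE n (U k) (p k) (V k) (q k) (f (k - 1)) i"
    and sn: "struct_nonsingular n (f r)"
    and jac: "sys_jac_nonsingular n (f r)"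
  shows "sys_jac_nonsingular (2 * n) (aug_DAE n r V q (f r))"
proof -
  obtain pr qr where "dual_optimal n (f r) pr qr" and ns: "jac_nonsingular_at n (f r) pr qr"
    using jac unfolding sys_jac_nonsingular_def by blast
  then have feas: "dual_feasible n (f r) pr qr" unfolding dual_optimal_def by blast
  define M where "M = Vop_chain_order_bound n q [1..<Suc r] + 1"
  then have M: "Vop_chain_order_bound n q [1..<Suc r] < M" by simp
  have "jac_nonsingular_at (2 * n) (aug_DAE n r V q (f r)) (aug_p n M pr) (aug_q n M qr)"
    using ns M by (rule aug_DAE_jac_nonsingular_at)
  moreover have "dual_feasible (2 * n) (aug_DAE n r V q (f r)) (aug_p n M pr) (aug_q n M qr)"
    using feas M by (rule aug_DAE_dual_feasible)
  ultimately show ?thesis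
    unfolding sys_jac_nonsingular_def by (blast intro: dual_optimal_if_jac_nonsingular_at)
qed

end
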